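(* Let $g:\mathbb{Z}_{\ge 0}\to\mathbb{R}$ be a linearly progressing opponent process (LPOP) with switching time $\tau_0\ge1$ (so $g(0)>0$). Let $T\ge1$, $y_{\min}\in\mathbb{R}$, and let $(y^{\mathrm{nat,lb}}_t)_{t=1}^{T}$ be a given real sequence. Define doses recursively for $t=0,\dots,T-1$ by $$u_t=\max\left\{0,\ \frac{y_{\min}-y^{\mathrm{nat,lb}}_{t+1}-\sum_{k=1}^{t} g(k)\,u_{t-k}}{g(0)}\right\}.$$ Call a natural progression $(y^{\mathrm{nat}}_t)_{t\ge0}$ admissible if $y^{\mathrm{nat}}_t\ge y^{\mathrm{nat,lb}}_t$ for all $t=1,\dots,T$. Then: (a) for every admissible natural progression, the well-being sequence defined by $y_0=y^{\mathrm{nat}}_0$ and $y_{t+1}=\sum_{k=0}^{t}g(k)u_{t-k}+y^{\mathrm{nat}}_{t+1}$ satisfies $y_t\ge y_{\min}$ for all $t=1,\dots,T$; and (b) $(u_t)$ has minimal cumulative dose $\sum_{t=0}^{T-1}u_t$ among all nonnegative dosing sequences $(u'_0,\dots,u'_{T-1})$ that guarantee $y'_t\ge y_{\min}$ for all $t=1,\dots,T$ under every admissible natural progression.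
   Context: An impulse response $g:\mathbb{Z}_{\ge0}\to\mathbb{R}$ is an opponent process if there is a time $\tau_0$ with $g(\tau)>0$ for $\tau<\tau_0$ and $g(\tau)\le 0$ for $\tau\ge\tau_0$. It is a linearly progressing opponent process (LPOP) if in addition there is $\alpha\in[0,1)$ with $g(t+1)\le\alpha\,g(t)$ for all $t<\tau_0-1$ and $|g(t+1)|\ge\alpha\,|g(t)|$ for all $t\ge\tau_0$. Doses are nonnegative reals; the well-being of a dosing sequence $u'$ under natural progression $y^{\mathrm{nat}}$ is $y'_0=y^{\mathrm{nat}}_0$, $y'_{t+1}=\sum_{k=0}^{t}g(k)u'_{t-k}+y^{\mathrm{nat}}_{t+1}$. *)

theory Defs
  imports Complex_Main
begin

definition opponent_process :: "(nat \<Rightarrow> real) \<Rightarrow> nat \<Rightarrow> bool" where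
  "opponent_process g tau0 \<longleftrightarrow>
     (\<forall>\<tau><tau0. g \<tau> > 0) \<and> (\<forall>\<tau>\<ge>tau0. g \<tau> \<le> 0)"

definition LPOP :: "(nat \<Rightarrow> real) \<Rightarrow> nat \<Rightarrow> bool" where
  "LPOP g tau0 \<longleftrightarrow> opponent_process g tau0 \<and>
     (\<exists>\<alpha>::real. 0 \<le> \<alpha> \<and> \<alpha> < 1 \<and>
        (\<forall>t. t + 1 < tau0 \<longrightarrow> g (t + 1) \<le> \<alpha> * g t) \<and>
        (\<forall>t\<ge>tau0. \<bar>g (t + 1)\<bar> \<ge> \<alpha> * \<bar>g t\<bar>))"

fun wellbeing :: "(nat \<Rightarrow> real) \<Rightarrow> (nat \<Rightarrow> real) \<Rightarrow> (nat \<Rightarrow> real) \<Rightarrow> nat \<Rightarrow> real" where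
  "wellbeing g u ynat 0 = ynat 0"
| "wellbeing g u ynat (Suc t) = (\<Sum>k\<le>t. g k * u (t - k)) + ynat (Suc t)"

definition admissible :: "nat \<Rightarrow> (nat \<Rightarrow> real) \<Rightarrow> (nat \<Rightarrow> real) \<Rightarrow> bool" where
  "admissible T ylb ynat \<longleftrightarrow> (\<forall>t\<in>{1..T}. ynat t \<ge> ylb t)"

end

theory Submission
  imports Defs
begin

text \<open>
  The worst admissible natural progression is the lower bound itself, so a dosing is safe for
  every admissible progression iff the responses meet the linear constraints
  \<open>y\<^sub>m\<^sub>i\<^sub>n \<le> (g * v)(m) + y\<^sup>l\<^sup>b(m+1)\<close> for \<open>m < T\<close>.
  The greedy dose \<open>u\<^sub>n\<close> is the least one meeting constraint \<open>n\<close> given the doses before it.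
  Exchange argument: a safe dosing \<open>v\<close> agreeing with \<open>u\<close> before \<open>n\<close> has \<open>v\<^sub>n \<ge> u\<^sub>n\<close>; replacing the
  excess \<open>\<delta> = v\<^sub>n - u\<^sub>n\<close> at time \<open>n\<close> by \<open>\<alpha> \<delta>\<close> at time \<open>n+1\<close> keeps all later constraints because
  \<open>g(k) \<le> \<alpha> g(k-1)\<close>, and does not increase the total dose because \<open>\<alpha> < 1\<close>. Repeating this
  turns \<open>v\<close> into \<open>u\<close> without ever increasing the cumulative dose.
\<close>

lemma LPOP_contraction:
  assumes "LPOP g tau0" and "tau0 \<ge> 1"
  obtains \<alpha> where "0 \<le> \<alpha>" "\<alpha> < 1" "\<And>k. k \<ge> 1 \<Longrightarrow> g k \<le> \<alpha> * g (k - 1)"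
proof -
  from assms(1) obtain \<alpha> where "0 \<le> \<alpha>" "\<alpha> < 1"
    and pos_phase: "\<And>t. t + 1 < tau0 \<Longrightarrow> g (t + 1) \<le> \<alpha> * g t"
    and neg_phase: "\<And>t. t \<ge> tau0 \<Longrightarrow> \<bar>g (t + 1)\<bar> \<ge> \<alpha> * \<bar>g t\<bar>"
    and pos: "\<And>t. t < tau0 \<Longrightarrow> g t > 0" and nonpos: "\<And>t. t \<ge> tau0 \<Longrightarrow> g t \<le> 0"
    unfolding LPOP_def opponent_process_def by blast
  have "g k \<le> \<alpha> * g (k - 1)" if "k \<ge> 1" for k
  proof -
    consider "k < tau0" | "k = tau0" | "k > tau0" by linarith
    then show ?thesis
    proof cases
      case 1
      then show ?thesis using pos_phase[of "k - 1"] that by simp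
    next
      case 2
      then have "0 \<le> \<alpha> * g (k - 1)" using pos[of "k - 1"] \<open>0 \<le> \<alpha>\<close> that by simp
      then show ?thesis using nonpos[of k] 2 by linarith
    next
      case 3
      then have "\<bar>g k\<bar> \<ge> \<alpha> * \<bar>g (k - 1)\<bar>" "g k \<le> 0" "g (k - 1) \<le> 0"
        using neg_phase[of "k - 1"] nonpos that by auto
      then show ?thesis by simp
    qed
  qed
  with \<open>0 \<le> \<alpha>\<close> \<open>\<alpha> < 1\<close> show thesis using that by blast
qed

lemma LPOP_pos_0: "LPOP g tau0 \<Longrightarrow> tau0 \<ge> 1 \<Longrightarrow> g 0 > 0"
  unfolding LPOP_def opponent_process_def by simp

definition dose_response :: "(nat \<Rightarrow> real) \<Rightarrow> (nat \<Rightarrow> real) \<Rightarrow> nat \<Rightarrow> real" where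
  "dose_response g v m = (\<Sum>k\<le>m. g k * v (m - k))"

definition safe_dosing :: "(nat \<Rightarrow> real) \<Rightarrow> nat \<Rightarrow> (nat \<Rightarrow> real) \<Rightarrow> real \<Rightarrow> (nat \<Rightarrow> real) \<Rightarrow> bool" where
  "safe_dosing g T ylb ymin v \<longleftrightarrow>
     (\<forall>t<T. 0 \<le> v t) \<and> (\<forall>m<T. ymin \<le> dose_response g v m + ylb (Suc m))"

lemma wellbeing_Suc: "wellbeing g v ynat (Suc m) = dose_response g v m + ynat (Suc m)"
  by (simp add: dose_response_def)

lemma robust_iff_lower_bound_constraints:
  "(\<forall>ynat. admissible T ylb ynat \<longrightarrow> (\<forall>t\<in>{1..T}. ymin \<le> wellbeing g v ynat t)) \<longleftrightarrow>
   (\<forall>m<T. ymin \<le> dose_response g v m + ylb (Suc m))"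
proof
  assume "\<forall>ynat. admissible T ylb ynat \<longrightarrow> (\<forall>t\<in>{1..T}. ymin \<le> wellbeing g v ynat t)"
  moreover have "admissible T ylb ylb" by (simp add: admissible_def)
  ultimately show "\<forall>m<T. ymin \<le> dose_response g v m + ylb (Suc m)"
    by (metis Suc_leI atLeastAtMost_iff le_add1 plus_1_eq_Suc wellbeing_Suc)
next
  assume constraints: "\<forall>m<T. ymin \<le> dose_response g v m + ylb (Suc m)"
  show "\<forall>ynat. admissible T ylb ynat \<longrightarrow> (\<forall>t\<in>{1..T}. ymin \<le> wellbeing g v ynat t)"
  proof (intro allI impI ballI)
    fix ynat t assume "admissible T ylb ynat" "t \<in> {1..T}"
    then obtain m where "t = Suc m" "m < T" "ylb (Suc m) \<le> ynat (Suc m)"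
      unfolding admissible_def by (cases t) auto
    then show "ymin \<le> wellbeing g v ynat t" using constraints wellbeing_Suc by force
  qed
qed

lemma dose_response_split_first:
  "dose_response g v m = g 0 * v m + (\<Sum>k=1..m. g k * v (m - k))"
proof -
  have "{..m} = insert 0 {1..m}" by auto
  then show ?thesis by (simp add: dose_response_def)
qed

lemma dose_response_cong: "(\<And>i. i \<le> m \<Longrightarrow> v i = w i) \<Longrightarrow> dose_response g v m = dose_response g w m"
  unfolding dose_response_def by (intro sum.cong) auto

lemma dose_response_add:
  "dose_response g (\<lambda>i. v i + w i) m = dose_response g v m + dose_response g w m"
  by (simp add: dose_response_def distrib_left sum.distrib)

lemma dose_response_single:
  "dose_response g (\<lambda>i. if i = n then c else 0) m = (if n \<le> m then g (m - n) * c else 0)"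
proof -
  have "dose_response g (\<lambda>i. if i = n then c else 0) m = (\<Sum>k\<le>m. if k = m - n \<and> n \<le> m then g k * c else 0)"
    unfolding dose_response_def by (intro sum.cong) auto
  then show ?thesis by (simp add: sum.delta')
qed

definition defer_dose :: "real \<Rightarrow> nat \<Rightarrow> real \<Rightarrow> (nat \<Rightarrow> real) \<Rightarrow> nat \<Rightarrow> real" where
  "defer_dose \<alpha> n c v i = v i + (if i = n then - c else 0) + (if i = Suc n then \<alpha> * c else 0)"

lemma dose_response_defer_dose:
  "dose_response g (defer_dose \<alpha> n c v) m =
     dose_response g v m - (if n \<le> m then g (m - n) * c else 0)
       + (if n < m then g (m - Suc n) * (\<alpha> * c) else 0)"
  unfolding defer_dose_def dose_response_add dose_response_single by auto

lemma sum_defer_dose_le: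
  assumes "0 \<le> c" and "\<alpha> \<le> 1"
  shows "(\<Sum>t<T. defer_dose \<alpha> n c v t) \<le> (\<Sum>t<T. v t)"
proof -
  have "(\<Sum>t<T. defer_dose \<alpha> n c v t) =
      (\<Sum>t<T. v t) + (if n < T then - c else 0) + (if Suc n < T then \<alpha> * c else 0)"
    by (simp add: defer_dose_def sum.distrib sum.delta')
  moreover have "\<alpha> * c \<le> c" using mult_right_mono[OF assms(2,1)] by simp
  ultimately show ?thesis using assms by auto
qed

lemma safe_dosing_defer_dose:
  assumes safe: "safe_dosing g T ylb ymin v"
    and "0 \<le> \<alpha>" and contraction: "\<And>k. k \<ge> 1 \<Longrightarrow> g k \<le> \<alpha> * g (k - 1)"
    and "0 \<le> c" "c \<le> v n"
    and at_n: "ymin \<le> dose_response g (defer_dose \<alpha> n c v) n + ylb (Suc n)"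
  shows "safe_dosing g T ylb ymin (defer_dose \<alpha> n c v)"
  unfolding safe_dosing_def
proof (intro conjI allI impI)
  fix t assume "t < T"
  then show "0 \<le> defer_dose \<alpha> n c v t"
    using safe \<open>0 \<le> \<alpha>\<close> \<open>0 \<le> c\<close> \<open>c \<le> v n\<close> by (auto simp: safe_dosing_def defer_dose_def)
next
  fix m assume "m < T"
  then have at_m: "ymin \<le> dose_response g v m + ylb (Suc m)"
    using safe by (simp add: safe_dosing_def)
  consider "m < n" | "m = n" | "n < m" by linarith
  then show "ymin \<le> dose_response g (defer_dose \<alpha> n c v) m + ylb (Suc m)"
  proof cases
    case 1
    then show ?thesis using at_m by (simp add: dose_response_defer_dose)
  next
    case 2
    then show ?thesis using at_n by simp
  next
    case 3
    then have "g (m - n) \<le> \<alpha> * g (m - Suc n)" using contraction[of "m - n"] by simp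
    then have "g (m - n) * c \<le> g (m - Suc n) * (\<alpha> * c)"
      using \<open>0 \<le> c\<close> by (metis mult.assoc mult.commute mult_right_mono)
    then show ?thesis using 3 at_m by (simp add: dose_response_defer_dose)
  qed
qed

lemma greedy_dose_meets_constraint:
  assumes "0 < g 0"
    and greedy: "\<forall>t<T. u t = max 0 ((ymin - ylb (t + 1) - (\<Sum>k=1..t. g k * u (t - k))) / g 0)"
    and "n < T"
  shows "0 \<le> u n" and "ymin \<le> dose_response g u n + ylb (Suc n)"
proof -
  have u_n: "u n = max 0 ((ymin - ylb (n + 1) - (\<Sum>k=1..n. g k * u (n - k))) / g 0)"
    using greedy \<open>n < T\<close> by blast
  then show "0 \<le> u n" by simp
  have "(ymin - ylb (n + 1) - (\<Sum>k=1..n. g k * u (n - k))) / g 0 \<le> u n"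
    unfolding u_n by simp
  then show "ymin \<le> dose_response g u n + ylb (Suc n)"
    using \<open>0 < g 0\<close> by (simp add: dose_response_split_first divide_le_eq mult.commute)
qed

lemma greedy_dose_le:
  assumes "0 < g 0"
    and greedy: "\<forall>t<T. u t = max 0 ((ymin - ylb (t + 1) - (\<Sum>k=1..t. g k * u (t - k))) / g 0)"
    and "n < T" and agree: "\<forall>s<n. v s = u s"
    and "0 \<le> v n" and at_n: "ymin \<le> dose_response g v n + ylb (Suc n)"
  shows "u n \<le> v n"
proof -
  have "(\<Sum>k=1..n. g k * v (n - k)) = (\<Sum>k=1..n. g k * u (n - k))"
    using agree by (intro sum.cong) auto
  then have "ymin - ylb (n + 1) - (\<Sum>k=1..n. g k * u (n - k)) \<le> g 0 * v n"
    using at_n by (simp add: dose_response_split_first)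
  then have "(ymin - ylb (n + 1) - (\<Sum>k=1..n. g k * u (n - k))) / g 0 \<le> v n"
    using \<open>0 < g 0\<close> by (simp add: divide_le_eq mult.commute)
  moreover have "u n = max 0 ((ymin - ylb (n + 1) - (\<Sum>k=1..n. g k * u (n - k))) / g 0)"
    using greedy \<open>n < T\<close> by blast
  ultimately show ?thesis using \<open>0 \<le> v n\<close> by simp
qed

lemma greedy_dosing_safe:
  assumes "0 < g 0"
    and greedy: "\<forall>t<T. u t = max 0 ((ymin - ylb (t + 1) - (\<Sum>k=1..t. g k * u (t - k))) / g 0)"
  shows "safe_dosing g T ylb ymin u"
  using greedy_dose_meets_constraint[OF assms] by (simp add: safe_dosing_def)

lemma greedy_dosing_minimal:
  assumes "0 < g 0"
    and "0 \<le> \<alpha>" "\<alpha> \<le> 1" and contraction: "\<And>k. k \<ge> 1 \<Longrightarrow> g k \<le> \<alpha> * g (k - 1)"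
    and greedy: "\<forall>t<T. u t = max 0 ((ymin - ylb (t + 1) - (\<Sum>k=1..t. g k * u (t - k))) / g 0)"
    and "safe_dosing g T ylb ymin v"
  shows "(\<Sum>t<T. u t) \<le> (\<Sum>t<T. v t)"
proof -
  have "\<forall>v. safe_dosing g T ylb ymin v \<longrightarrow> (\<forall>s<n. v s = u s) \<longrightarrow> (\<Sum>t<T. u t) \<le> (\<Sum>t<T. v t)"
    if "n \<le> T" for n
    using that
  proof (induction n rule: inc_induct)
    case base
    have "(\<Sum>t<T. u t) = (\<Sum>t<T. v t)" if "\<forall>s<T. v s = u s" for v :: "nat \<Rightarrow> real"
      using that by (intro sum.cong) auto
    then show ?case by simp
  next
    case (step n)
    show ?case
    proof (intro allI impI)
      fix v assume safe: "safe_dosing g T ylb ymin v" and agree: "\<forall>s<n. v s = u s"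
      have "0 \<le> u n" and greedy_at_n: "ymin \<le> dose_response g u n + ylb (Suc n)"
        using greedy_dose_meets_constraint[OF \<open>0 < g 0\<close> greedy step.hyps(2)] by auto
      have "u n \<le> v n"
        using greedy_dose_le[OF \<open>0 < g 0\<close> greedy step.hyps(2) agree] safe step.hyps(2)
        by (simp add: safe_dosing_def)
      define w where "w = defer_dose \<alpha> n (v n - u n) v"
      have agree_w: "\<forall>s<Suc n. w s = u s"
        using agree by (auto simp: w_def defer_dose_def less_Suc_eq)
      then have "dose_response g w n = dose_response g u n"
        by (intro dose_response_cong) simp
      then have "ymin \<le> dose_response g w n + ylb (Suc n)"
        using greedy_at_n by simp
      then have "safe_dosing g T ylb ymin w"
        unfolding w_def using \<open>u n \<le> v n\<close> \<open>0 \<le> u n\<close>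
        by (intro safe_dosing_defer_dose[OF safe \<open>0 \<le> \<alpha>\<close> contraction]) auto
      then have "(\<Sum>t<T. u t) \<le> (\<Sum>t<T. w t)" using step.IH agree_w by blast
      also have "\<dots> \<le> (\<Sum>t<T. v t)"
        unfolding w_def using \<open>u n \<le> v n\<close> \<open>\<alpha> \<le> 1\<close> by (intro sum_defer_dose_le) auto
      finally show "(\<Sum>t<T. u t) \<le> (\<Sum>t<T. v t)" .
    qed
  qed
  then show ?thesis using \<open>safe_dosing g T ylb ymin v\<close> by blast
qed

theorem proposition1:
  fixes g u ylb :: "nat \<Rightarrow> real" and tau0 T :: nat and ymin :: real
  assumes "LPOP g tau0" and "tau0 \<ge> 1" and "T \<ge> 1"
    and u_def: "\<forall>t<T. u t = max 0 ((ymin - ylb (t + 1) - (\<Sum>k=1..t. g k * u (t - k))) / g 0)"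
  shows "(\<forall>ynat. admissible T ylb ynat \<longrightarrow> (\<forall>t\<in>{1..T}. wellbeing g u ynat t \<ge> ymin))
    \<and> (\<forall>u'. (\<forall>t<T. u' t \<ge> 0) \<longrightarrow>
          (\<forall>ynat. admissible T ylb ynat \<longrightarrow> (\<forall>t\<in>{1..T}. wellbeing g u' ynat t \<ge> ymin)) \<longrightarrow>
          (\<Sum>t<T. u t) \<le> (\<Sum>t<T. u' t))"
proof -
  have g0: "g 0 > 0" using LPOP_pos_0 assms(1,2) .
  obtain \<alpha> where "0 \<le> \<alpha>" "\<alpha> < 1" and contraction: "\<And>k. k \<ge> 1 \<Longrightarrow> g k \<le> \<alpha> * g (k - 1)"
    using LPOP_contraction assms(1,2) by blast
  have "safe_dosing g T ylb ymin u" using greedy_dosing_safe[OF g0 u_def] .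
  then have robust: "\<forall>ynat. admissible T ylb ynat \<longrightarrow> (\<forall>t\<in>{1..T}. wellbeing g u ynat t \<ge> ymin)"
    unfolding robust_iff_lower_bound_constraints safe_dosing_def by blast
  have "(\<Sum>t<T. u t) \<le> (\<Sum>t<T. u' t)"
    if "\<forall>t<T. u' t \<ge> 0"
      and "\<forall>ynat. admissible T ylb ynat \<longrightarrow> (\<forall>t\<in>{1..T}. wellbeing g u' ynat t \<ge> ymin)" for u'
    using that \<open>0 \<le> \<alpha>\<close> \<open>\<alpha> < 1\<close> robust_iff_lower_bound_constraints[where v = u']
    by (intro greedy_dosing_minimal[OF g0 _ _ contraction u_def]) (auto simp: safe_dosing_def)
  with robust show ?thesis by blast
qed

end
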